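(* Let $p\in(1,\infty)$ and $X\in\mathfrak A_p$. Let $\theta\in[0,\underline Q_\mu(1))$ and let $S\subset X$ be a closed set with $\mathcal H_\theta(S)\in(0,+\infty)$. Then $\mathfrak M^{str}_\theta(S)=\mathfrak M_\theta(S)$.
   Context: A metric measure space is a triple $X=(X,d,\mu)$ with $(X,d)$ a complete separable metric space and $\mu$ a Borel regular measure with $0<\mu(B)<\infty$ for every ball $B$ and $\operatorname{supp}\mu=X$. All balls are closed: $B_r(x)=\{y:d(x,y)\le r\}$; $r(B)$ is the radius. A measure on $X$ means a nonzero Borel regular locally finite (outer) measure. $\mu$ is uniformly locally doubling if for every $R>0$, $\sup_{r\in(0,R]}\sup_x\mu(B_{2r}(x))/\mu(B_r(x))<\infty$. $\operatorname{lip}f(x)=\limsup_{y\to x}|f(y)-f(x)|/d(x,y)$ at accumulation points, $0$ otherwise; $\mathcal E_{\mathfrak m}(f,G)=\inf_{c}\frac1{\mathfrak m(G)}\int_G|f-c|d\mathfrak m$. $X\in\mathfrak A_q$ if $\mu$ is uniformly locally doubling and for every $R>0$ there are $C>0,\lambda\ge1$ with $\mathcal E_\mu(f,B_r(x))\le Cr(\frac1{\mu(B_{\lambda r}(x))}\int_{B_{\lambda r}(x)}(\operatorname{lip}f)^qd\mu)^{1/q}$ for all Lipschitz $f$, $x$, $r\in(0,R]$. $\mu$ has relative lower volume decay of order $Q>0$ up to scale $R$ if there is $C(Q,R)>0$ with $(r(B')/r(B))^Q\le C(Q,R)\mu(B')/\mu(B)$ for all closed balls $B'\subset B$ with $r(B)<R$;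 $\operatorname{Q}_\mu(R)$ is the set of such $Q$ and $\underline Q_\mu(R)=\inf\operatorname{Q}_\mu(R)$. For $\theta\ge0$, $\mathcal H_{\theta,\delta}(E)=\inf\{\sum_i\mu(B_{r_i}(x_i))/r_i^\theta:E\subset\bigcup_iB_{r_i}(x_i),\ r_i<\delta\}$ and $\mathcal H_\theta(E)=\lim_{\delta\to0}\mathcal H_{\theta,\delta}(E)$. $\{\mathfrak m_k\}_{k=0}^\infty\in\mathfrak M_\theta(S)$ (with parameter $\epsilon\in(0,1)$) means: (M1) $\operatorname{supp}\mathfrak m_k=S$ for all $k$; (M2) there is $C_1>0$ with $\mathfrak m_k(B_r(x))\le C_1\mu(B_r(x))/r^\theta$ for all $k$, $x\in X$, $r\in(0,\epsilon^k]$; (M3) there is $C_2>0$ with $\mathfrak m_k(B_r(x))\ge C_2\mu(B_r(x))/r^\theta$ for all $k$, $x\in S$, $r\in[\epsilon^k,1]$; (M4) $\mathfrak m_k=w_k\mathfrak m_0$ with $w_k\in L^\infty(\mathfrak m_0)$ and $C_3>0$ such that $\epsilon^{\theta j}/C_3\le w_k(x)/w_{k+j}(x)\le C_3$ for $\mathfrak m_0$-a.e. $x\in S$, all $k,j$. $\{\mathfrak m_k\}\in\mathfrak M^{str}_\theta(S)$ if moreover (M5) for every Borel $E\subset S$, $\limsup_{k\to\infty}\mathfrak m_k(B_{\epsilon^k}(x)\cap E)/\mathfrak m_k(B_{\epsilon^k}(x))>0$ for $\mathfrak m_0$-a.e. $x\in E$. *)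

theory Defs
  imports "HOL-Analysis.Analysis" "HOL-Library.Liminf_Limsup"
begin

definition supp_meas :: "'a::metric_space measure \<Rightarrow> 'a set" where
  "supp_meas m = {x. \<forall>r>0. emeasure m (ball x r) > 0}"

definition mms :: "'a::polish_space measure \<Rightarrow> bool" where
  "mms \<mu> \<longleftrightarrow> sets \<mu> = sets borel \<and>
     (\<forall>x r. r > 0 \<longrightarrow> 0 < emeasure \<mu> (cball x r) \<and> emeasure \<mu> (cball x r) < \<infinity>) \<and>
     supp_meas \<mu> = UNIV"

definition is_meas :: "'a::metric_space measure \<Rightarrow> bool" where
  "is_meas m \<longleftrightarrow> sets m = sets borel \<and> emeasure m UNIV \<noteq> 0 \<and>
     (\<forall>x. \<exists>r>0. emeasure m (ball x r) < \<infinity>)"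

definition unif_loc_doubling :: "'a::metric_space measure \<Rightarrow> bool" where
  "unif_loc_doubling \<mu> \<longleftrightarrow> (\<forall>R>0. \<exists>C. \<forall>r x. 0 < r \<longrightarrow> r \<le> R \<longrightarrow>
      measure \<mu> (cball x (2*r)) \<le> C * measure \<mu> (cball x r))"

definition lipf :: "('a::metric_space \<Rightarrow> real) \<Rightarrow> 'a \<Rightarrow> ereal" where
  "lipf f x = (if x islimpt UNIV
     then Limsup (at x) (\<lambda>y. ereal (\<bar>f y - f x\<bar> / dist x y)) else 0)"

definition osc :: "'a measure \<Rightarrow> ('a \<Rightarrow> real) \<Rightarrow> 'a set \<Rightarrow> ennreal" where
  "osc m f G = (INF c::real. (\<integral>\<^sup>+ y\<in>G. ennreal \<bar>f y - c\<bar> \<partial>m) / emeasure m G)"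

definition class_A :: "real \<Rightarrow> 'a::polish_space measure \<Rightarrow> bool" where
  "class_A q \<mu> \<longleftrightarrow> mms \<mu> \<and> unif_loc_doubling \<mu> \<and>
    (\<forall>R>0. \<exists>C>0. \<exists>lam\<ge>1. \<forall>f x r. (\<exists>L. L-lipschitz_on UNIV f) \<longrightarrow> 0 < r \<longrightarrow> r \<le> R \<longrightarrow>
        osc \<mu> f (cball x r) \<le>
        ennreal (C * r * (enn2real (\<integral>\<^sup>+ y\<in>cball x (lam*r). ennreal (real_of_ereal (lipf f y) powr q) \<partial>\<mu>)
                            / measure \<mu> (cball x (lam*r))) powr (1/q)))"

text \<open>Relative lower volume decay exponents up to scale R, and their infimum (+infinity if none).\<close>
definition Q_set :: "'a::metric_space measure \<Rightarrow> real \<Rightarrow> real set" where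
  "Q_set \<mu> R = {Q. Q > 0 \<and> (\<exists>C>0. \<forall>x r x' r'. 0 < r \<longrightarrow> 0 < r' \<longrightarrow> r < R \<longrightarrow>
      cball x' r' \<subseteq> cball x r \<longrightarrow>
      (r' / r) powr Q \<le> C * (measure \<mu> (cball x' r') / measure \<mu> (cball x r)))}"

definition Q_lower :: "'a::metric_space measure \<Rightarrow> real \<Rightarrow> ereal" where
  "Q_lower \<mu> R = Inf (ereal ` Q_set \<mu> R)"

text \<open>Codimension-theta Hausdorff content at scale delta (countable, possibly finite covers indexed by I)
  and the limit as delta tends to 0 (an increasing limit, hence a supremum).\<close>
definition H_delta :: "real \<Rightarrow> 'a::metric_space measure \<Rightarrow> real \<Rightarrow> 'a set \<Rightarrow> ennreal" where
  "H_delta \<theta> \<mu> \<delta> E = (INF cov \<in> {(I, c, r). (I::nat set) \<subseteq> UNIV \<and>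
        (\<forall>i\<in>I. 0 < r i \<and> r i < \<delta>) \<and> E \<subseteq> (\<Union>i\<in>I. cball (c i) (r i))}.
      case cov of (I, c, r) \<Rightarrow>
        (\<Sum>i. if i \<in> I then emeasure \<mu> (cball (c i) (r i)) / ennreal (r i powr \<theta>) else 0))"

definition H_theta :: "real \<Rightarrow> 'a::metric_space measure \<Rightarrow> 'a set \<Rightarrow> ennreal" where
  "H_theta \<theta> \<mu> E = (SUP \<delta>\<in>{0<..}. H_delta \<theta> \<mu> \<delta> E)"

definition M_class :: "real \<Rightarrow> real \<Rightarrow> 'a::metric_space measure \<Rightarrow> 'a set \<Rightarrow> (nat \<Rightarrow> 'a measure) set" where
  "M_class \<theta> \<epsilon> \<mu> S = {m. (\<forall>k. is_meas (m k)) \<and>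
     (\<forall>k. supp_meas (m k) = S) \<and>
     (\<exists>C1>0. \<forall>k x r. 0 < r \<longrightarrow> r \<le> \<epsilon>^k \<longrightarrow>
        emeasure (m k) (cball x r) \<le> ennreal (C1 * measure \<mu> (cball x r) / r powr \<theta>)) \<and>
     (\<exists>C2>0. \<forall>k. \<forall>x\<in>S. \<forall>r. \<epsilon>^k \<le> r \<longrightarrow> r \<le> 1 \<longrightarrow>
        ennreal (C2 * measure \<mu> (cball x r) / r powr \<theta>) \<le> emeasure (m k) (cball x r)) \<and>
     (\<exists>w::nat \<Rightarrow> 'a \<Rightarrow> real.
        (\<forall>k. w k \<in> borel_measurable borel \<and> (\<exists>B. AE x in m 0. \<bar>w k x\<bar> \<le> B) \<and>
             m k = density (m 0) (\<lambda>x. ennreal (w k x))) \<and>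
        (\<exists>C3>0. \<forall>k j. AE x in m 0. x \<in> S \<longrightarrow>
             \<epsilon> powr (\<theta> * real j) / C3 \<le> w k x / w (k + j) x \<and> w k x / w (k + j) x \<le> C3))}"

definition M_str_class :: "real \<Rightarrow> real \<Rightarrow> 'a::metric_space measure \<Rightarrow> 'a set \<Rightarrow> (nat \<Rightarrow> 'a measure) set" where
  "M_str_class \<theta> \<epsilon> \<mu> S = {m. m \<in> M_class \<theta> \<epsilon> \<mu> S \<and>
     (\<forall>E. E \<in> sets borel \<longrightarrow> E \<subseteq> S \<longrightarrow>
        (AE x in m 0. x \<in> E \<longrightarrow>
          limsup (\<lambda>k. ereal (measure (m k) (cball x (\<epsilon>^k) \<inter> E) / measure (m k) (cball x (\<epsilon>^k)))) > 0))}"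

end

theory Submission
  imports Defs
begin

text \<open>
  Fix \<open>m \<in> M_class \<theta> \<epsilon> \<mu> S\<close> and a Borel set \<open>E \<subseteq> S\<close>, and let \<open>a\<^sub>k(x)\<close> be the relative
  \<open>m\<^sub>k\<close>-mass of \<open>E\<close> in \<open>B(x, \<epsilon>\<^sup>k)\<close>. By (M4) and (M2),
  \<open>m\<^sub>0(B(x, \<epsilon>\<^sup>k) \<inter> E) \<le> C a\<^sub>k(x) \<mu>(B(x, \<epsilon>\<^sup>k)) / (\<epsilon>\<^sup>k)\<^sup>\<theta>\<close>. Cover \<open>S\<close> by small balls whose
  sum \<open>\<Sum> \<mu>(B(c, r)) / r\<^sup>\<theta>\<close> is close to \<open>H_theta \<theta> \<mu> S\<close>. A ball \<open>B(c, r)\<close> of the cover meeting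
  the set where \<open>a\<^sub>k \<le> t\<close> for all \<open>k \<ge> K\<close> at a point \<open>p\<close> lies in \<open>B(p, \<epsilon>\<^sup>k)\<close> for an \<open>\<epsilon>\<^sup>k\<close>
  comparable to \<open>r\<close>, so by doubling its \<open>m\<^sub>0\<close>-mass in \<open>E\<close> is at most \<open>C t \<mu>(B(c, r)) / r\<^sup>\<theta>\<close>.
  Hence that set has \<open>m\<^sub>0\<close>-measure \<open>O(t)\<close>, and letting \<open>t \<rightarrow> 0\<close> gives (M5).
\<close>

lemma ennreal_le_cmult_of_ratio:
  fixes x y C :: real
  assumes pos: "0 < x / y" and le: "x / y \<le> C"
  shows "ennreal x \<le> ennreal C * ennreal y"
proof (cases "0 < y")
  case True
  then have "x \<le> C * y" using le by (simp add: divide_le_eq)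
  then show ?thesis using pos le by (simp add: ennreal_mult'[symmetric] ennreal_leI)
next
  case False
  then have "x < 0" using pos by (auto simp: zero_less_divide_iff)
  then show ?thesis by (simp add: ennreal_neg)
qed

lemma emeasure_density_le_cmult:
  fixes f g :: "'a \<Rightarrow> ennreal"
  assumes f: "f \<in> borel_measurable M" and g: "g \<in> borel_measurable M" and A: "A \<in> sets M"
    and le: "AE x in M. x \<in> A \<longrightarrow> f x \<le> c * g x"
  shows "emeasure (density M f) A \<le> c * emeasure (density M g) A"
proof -
  have "emeasure (density M f) A = (\<integral>\<^sup>+x. f x * indicator A x \<partial>M)"
    using f A by (rule emeasure_density)
  also have "\<dots> \<le> (\<integral>\<^sup>+x. c * (g x * indicator A x) \<partial>M)"
    using le by (intro nn_integral_mono_AE) (auto elim!: eventually_mono split: split_indicator)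
  also have "\<dots> = c * (\<integral>\<^sup>+x. g x * indicator A x \<partial>M)"
    using g A by (intro nn_integral_cmult) (auto intro: borel_measurable_indicator)
  also have "\<dots> = c * emeasure (density M g) A"
    using g A by (simp add: emeasure_density)
  finally show ?thesis .
qed

lemma emeasure_Int_le_ratio:
  assumes B: "emeasure M B \<le> ennreal c" "B \<in> sets M" and E: "E \<in> sets M"
  shows "emeasure M (B \<inter> E) \<le> ennreal (measure M (B \<inter> E) / measure M B * c)"
proof -
  have fin: "emeasure M B < \<infinity>"
    using B(1) by (simp add: le_less_trans)
  then have fin': "emeasure M (B \<inter> E) < \<infinity>"
    using B(2) by (meson emeasure_mono inf_le1 le_less_trans)
  have le: "measure M (B \<inter> E) \<le> measure M B"
    using fin B(2) E by (intro measure_mono_fmeasurable) (auto simp: fmeasurable_def)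
  have "measure M (B \<inter> E) \<le> measure M (B \<inter> E) / measure M B * c"
  proof (cases "measure M B = 0")
    case False
    have "measure M B \<le> c"
    proof -
      have "0 < measure M B" using False by (simp add: less_le)
      moreover have "ennreal (measure M B) \<le> ennreal c"
        using B(1) fin by (simp add: emeasure_eq_ennreal_measure less_top)
      ultimately show ?thesis by (simp add: ennreal_le_iff2)
    qed
    then have "measure M (B \<inter> E) / measure M B * measure M B \<le> measure M (B \<inter> E) / measure M B * c"
      by (intro mult_left_mono) auto
    then show ?thesis using False by simp
  qed (use le in simp)
  then show ?thesis
    using fin' by (simp add: emeasure_eq_ennreal_measure less_top ennreal_leI)
qed

lemma Union_incseq_cover_emeasure_le:
  assumes inc: "incseq A" and cover: "\<And>K. \<exists>U\<in>sets M. A K \<subseteq> U \<and> emeasure M U \<le> c"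
  shows "\<exists>V\<in>sets M. (\<Union>K. A K) \<subseteq> V \<and> emeasure M V \<le> c"
proof -
  from cover have "\<forall>K. \<exists>U. U \<in> sets M \<and> A K \<subseteq> U \<and> emeasure M U \<le> c"
    unfolding Bex_def by (intro allI)
  then obtain U where U: "\<And>K. U K \<in> sets M" "\<And>K. A K \<subseteq> U K" "\<And>K. emeasure M (U K) \<le> c"
    unfolding choice_iff by blast
  define V where "V K = (\<Inter>j\<in>{K..}. U j)" for K
  have V_sets: "V K \<in> sets M" for K
    unfolding V_def using U(1) by (intro sets.countable_INT) auto
  have "A K \<subseteq> V K" for K
    unfolding V_def
  proof (rule INT_greatest)
    fix j assume "j \<in> {K..}"
    then have "A K \<subseteq> A j" using inc by (simp add: incseq_def)
    then show "A K \<subseteq> U j" using U(2) by blast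
  qed
  moreover have "emeasure M (\<Union>K. V K) \<le> c"
  proof -
    have "emeasure M (\<Union>K. V K) = (SUP K. emeasure M (V K))"
      using V_sets by (intro SUP_emeasure_incseq[symmetric]) (auto simp: incseq_def V_def)
    also have "\<dots> \<le> c"
    proof (rule SUP_least)
      fix K
      have "V K \<subseteq> U K" unfolding V_def by auto
      then have "emeasure M (V K) \<le> emeasure M (U K)" using U(1) by (rule emeasure_mono)
      then show "emeasure M (V K) \<le> c" using U(3) by (rule order_trans)
    qed
    finally show ?thesis .
  qed
  ultimately show ?thesis
    using V_sets by blast
qed

lemma AE_limsup_pos_of_small_covers:
  fixes a :: "nat \<Rightarrow> 'a \<Rightarrow> real"
  assumes cover: "\<And>t K. 0 < t \<Longrightarrow>
    \<exists>U\<in>sets M. {x\<in>E. \<forall>k\<ge>K. a k x \<le> t} \<subseteq> U \<and> emeasure M U \<le> ennreal (t * C)"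
  shows "AE x in M. x \<in> E \<longrightarrow> 0 < limsup (\<lambda>k. ereal (a k x))"
proof -
  define A where "A n K = {x\<in>E. \<forall>k\<ge>K. a k x \<le> 1 / Suc n}" for n K
  have "\<exists>W\<in>sets M. (\<Union>K. A n K) \<subseteq> W \<and>
      emeasure M W \<le> ennreal (C / Suc n)" for n
  proof (rule Union_incseq_cover_emeasure_le)
    show "incseq (A n)"
      by (auto simp: incseq_def A_def)
    show "\<exists>U\<in>sets M. A n K \<subseteq> U \<and> emeasure M U \<le> ennreal (C / Suc n)" for K
      using cover[of "1 / Suc n" K] by (simp add: A_def)
  qed
  then have "\<forall>n. \<exists>W. W \<in> sets M \<and> (\<Union>K. A n K) \<subseteq> W \<and>
      emeasure M W \<le> ennreal (C / Suc n)"
    unfolding Bex_def by (intro allI)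
  then obtain W where W: "\<And>n. W n \<in> sets M"
    "\<And>n. (\<Union>K. A n K) \<subseteq> W n"
    "\<And>n. emeasure M (W n) \<le> ennreal (C / Suc n)"
    unfolding choice_iff by blast
  have "emeasure M (\<Inter>n. W n) \<le> ennreal (C / Suc n)" for n
  proof -
    have "emeasure M (\<Inter>n. W n) \<le> emeasure M (W n)"
      using W(1) by (intro emeasure_mono) auto
    then show ?thesis using W(3) by (rule order_trans)
  qed
  moreover have "(\<lambda>n. ennreal (C / Suc n)) \<longlonglongrightarrow> 0"
    using LIMSEQ_Suc[OF lim_const_over_n[of C]] by (auto intro: tendsto_ennrealI[where x=0, simplified])
  ultimately have "emeasure M (\<Inter>n. W n) \<le> 0"
    by (intro LIMSEQ_le_const) auto
  then have "(\<Inter>n. W n) \<in> null_sets M"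
    using W(1) by auto
  moreover have "{x \<in> space M. \<not> (x \<in> E \<longrightarrow> 0 < limsup (\<lambda>k. ereal (a k x)))} \<subseteq> (\<Inter>n. W n)"
  proof
    fix x assume "x \<in> {x \<in> space M. \<not> (x \<in> E \<longrightarrow> 0 < limsup (\<lambda>k. ereal (a k x)))}"
    then have "x \<in> E" and "limsup (\<lambda>k. ereal (a k x)) \<le> 0" by auto
    show "x \<in> (\<Inter>n. W n)"
    proof
      fix n
      have "limsup (\<lambda>k. ereal (a k x)) < ereal (1 / Suc n)"
        using \<open>limsup _ \<le> 0\<close> by (rule le_less_trans) simp
      then have "eventually (\<lambda>k. ereal (a k x) < ereal (1 / Suc n)) sequentially"
        by (rule Limsup_lessD)
      then obtain K where "\<forall>k\<ge>K. a k x < 1 / Suc n"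
        unfolding eventually_sequentially by auto
      then have "x \<in> A n K"
        using \<open>x \<in> E\<close> by (auto simp: A_def intro: less_imp_le)
      then show "x \<in> W n" using W(2) by blast
    qed
  qed
  ultimately show ?thesis by (rule AE_I')
qed

lemma M_class_m0_le_cmult:
  fixes m :: "nat \<Rightarrow> 'a::metric_space measure"
  assumes m: "m \<in> M_class \<theta> \<epsilon> \<mu> S" and \<epsilon>: "0 < \<epsilon>"
  obtains C where "0 < C"
    and "\<And>A k. A \<in> sets borel \<Longrightarrow> A \<subseteq> S \<Longrightarrow> emeasure (m 0) A \<le> ennreal C * emeasure (m k) A"
proof -
  have sets: "sets (m 0) = sets borel"
    using m unfolding M_class_def is_meas_def by blast
  from m obtain w C where w: "\<forall>k. w k \<in> borel_measurable borel \<and> m k = density (m 0) (\<lambda>x. ennreal (w k x))"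
    and C: "0 < C" "\<forall>k j. AE x in m 0. x \<in> S \<longrightarrow>
      \<epsilon> powr (\<theta> * real j) / C \<le> w k x / w (k + j) x \<and> w k x / w (k + j) x \<le> C"
    unfolding M_class_def by blast
  have w_meas: "\<And>j. w j \<in> borel_measurable (m 0)"
    using w measurable_cong_sets[OF sets refl] by blast
  have w_density: "\<And>j. density (m 0) (\<lambda>x. ennreal (w j x)) = m j"
    using w by metis
  show ?thesis
  proof (rule that[OF C(1)])
    fix A k assume A: "A \<in> sets borel" "A \<subseteq> S"
    have "AE x in m 0. x \<in> S \<longrightarrow>
        \<epsilon> powr (\<theta> * real k) / C \<le> w 0 x / w k x \<and> w 0 x / w k x \<le> C"
      using C(2)[rule_format, where k=0 and j=k] by simp
    moreover have "0 < \<epsilon> powr (\<theta> * real k) / C" using \<epsilon> C(1) by simp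
    ultimately have "AE x in m 0. x \<in> A \<longrightarrow> ennreal (w 0 x) \<le> ennreal C * ennreal (w k x)"
      using A by (auto elim!: eventually_mono intro!: ennreal_le_cmult_of_ratio)
    then have "emeasure (density (m 0) (\<lambda>x. ennreal (w 0 x))) A
        \<le> ennreal C * emeasure (density (m 0) (\<lambda>x. ennreal (w k x))) A"
      using A sets w_meas by (intro emeasure_density_le_cmult) auto
    then show "emeasure (m 0) A \<le> ennreal C * emeasure (m k) A"
      by (simp only: w_density)
  qed
qed

lemma M_class_ball_Int_le:
  fixes m :: "nat \<Rightarrow> 'a::metric_space measure"
  assumes m: "m \<in> M_class \<theta> \<epsilon> \<mu> S" and \<epsilon>: "0 < \<epsilon>"
  obtains C where "0 < C"
    and "\<And>E x k. E \<in> sets borel \<Longrightarrow> E \<subseteq> S \<Longrightarrow>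
      emeasure (m 0) (cball x (\<epsilon>^k) \<inter> E) \<le> ennreal (C *
        (measure (m k) (cball x (\<epsilon>^k) \<inter> E) / measure (m k) (cball x (\<epsilon>^k))) *
        measure \<mu> (cball x (\<epsilon>^k)) / (\<epsilon>^k) powr \<theta>)"
proof -
  have sets: "\<And>k. sets (m k) = sets borel"
    using m unfolding M_class_def is_meas_def by blast
  from m obtain C1 where C1: "0 < C1" "\<forall>k x r. 0 < r \<longrightarrow> r \<le> \<epsilon>^k \<longrightarrow>
      emeasure (m k) (cball x r) \<le> ennreal (C1 * measure \<mu> (cball x r) / r powr \<theta>)"
    unfolding M_class_def by blast
  obtain C3 where C3: "0 < C3" and dominated: "\<And>A k. A \<in> sets borel \<Longrightarrow> A \<subseteq> S \<Longrightarrow>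
      emeasure (m 0) A \<le> ennreal C3 * emeasure (m k) A"
    using M_class_m0_le_cmult[OF m \<epsilon>] by blast
  show ?thesis
  proof (rule that)
    show "0 < C3 * C1" using C1(1) C3 by simp
  next
    fix E and x :: 'a and k assume E: "E \<in> sets borel" "E \<subseteq> S"
    define B where "B = cball x (\<epsilon>^k)"
    define ratio where "ratio = measure (m k) (B \<inter> E) / measure (m k) B"
    define c where "c = C1 * measure \<mu> B / (\<epsilon>^k) powr \<theta>"
    have "emeasure (m k) B \<le> ennreal c"
      unfolding B_def c_def using C1(2) \<epsilon> by simp
    then have ratio_c: "emeasure (m k) (B \<inter> E) \<le> ennreal (ratio * c)"
      unfolding ratio_def using E sets by (intro emeasure_Int_le_ratio) (auto simp: B_def)
    have "emeasure (m 0) (B \<inter> E) \<le> ennreal C3 * emeasure (m k) (B \<inter> E)"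
      using E by (intro dominated) (auto simp: B_def)
    also have "\<dots> \<le> ennreal C3 * ennreal (ratio * c)"
      using ratio_c by (rule mult_left_mono) simp
    also have "\<dots> = ennreal (C3 * C1 * ratio * measure \<mu> B / (\<epsilon>^k) powr \<theta>)"
      using C3 by (simp add: ennreal_mult'[symmetric] c_def mult_ac)
    finally show "emeasure (m 0) (cball x (\<epsilon>^k) \<inter> E) \<le> ennreal (C3 * C1 *
        (measure (m k) (cball x (\<epsilon>^k) \<inter> E) / measure (m k) (cball x (\<epsilon>^k))) *
        measure \<mu> (cball x (\<epsilon>^k)) / (\<epsilon>^k) powr \<theta>)"
      unfolding B_def ratio_def .
  qed
qed

lemma measure_cball_pow2_le:
  fixes \<mu> :: "'a::metric_space measure"
  assumes dbl: "\<And>x r. 0 < r \<Longrightarrow> r \<le> R \<Longrightarrow> measure \<mu> (cball x (2 * r)) \<le> D * measure \<mu> (cball x r)"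
    and D: "0 \<le> D"
  shows "0 < r \<Longrightarrow> 2^n * r \<le> 2 * R \<Longrightarrow> measure \<mu> (cball x (2^n * r)) \<le> D^n * measure \<mu> (cball x r)"
proof (induction n)
  case 0
  then show ?case by simp
next
  case (Suc n)
  then have "0 < 2^n * r" "2^n * r \<le> R" by simp_all
  moreover from this have "2^n * r \<le> 2 * R" by linarith
  ultimately have IH: "measure \<mu> (cball x (2^n * r)) \<le> D^n * measure \<mu> (cball x r)"
    using Suc.IH Suc.prems(1) by simp
  have "measure \<mu> (cball x (2^Suc n * r)) = measure \<mu> (cball x (2 * (2^n * r)))"
    by (simp add: mult.assoc)
  also have "\<dots> \<le> D * measure \<mu> (cball x (2^n * r))"
    using dbl \<open>0 < 2^n * r\<close> \<open>2^n * r \<le> R\<close> by blast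
  also have "\<dots> \<le> D * (D^n * measure \<mu> (cball x r))"
    using IH D by (rule mult_left_mono)
  finally show ?case by simp
qed

lemma mms_cball_fmeasurable:
  fixes \<mu> :: "'a::polish_space measure"
  assumes "mms \<mu>" "0 < r"
  shows "cball x r \<in> fmeasurable \<mu>"
  using assms unfolding mms_def by (auto simp: fmeasurable_def)

lemma unif_loc_doubling_dilation:
  fixes \<mu> :: "'a::polish_space measure"
  assumes "mms \<mu>" "unif_loc_doubling \<mu>"
  obtains D where "0 \<le> D"
    and "\<And>x r. 0 < r \<Longrightarrow> r \<le> 1 \<Longrightarrow> measure \<mu> (cball x (\<Lambda> * r)) \<le> D * measure \<mu> (cball x r)"
proof -
  obtain M :: nat where M: "\<Lambda> < 2^M"
    using real_arch_pow[of 2 \<Lambda>] by auto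
  obtain D0 where D0: "\<And>x r. 0 < r \<Longrightarrow> r \<le> 2^M \<Longrightarrow>
      measure \<mu> (cball x (2 * r)) \<le> D0 * measure \<mu> (cball x r)"
    using assms(2) unfolding unif_loc_doubling_def by (metis zero_less_numeral zero_less_power)
  define D where "D = max D0 0"
  have dbl: "measure \<mu> (cball x (2 * r)) \<le> D * measure \<mu> (cball x r)"
    if "0 < r" "r \<le> 2^M" for x r
    using D0[OF that, of x] unfolding D_def
    by (meson max.cobounded1 measure_nonneg mult_right_mono order_trans)
  show ?thesis
  proof (rule that)
    show "0 \<le> D^M" by (simp add: D_def)
  next
    fix x :: 'a and r :: real assume r: "0 < r" "r \<le> 1"
    have "cball x (2^M * r) \<in> fmeasurable \<mu>"
      using assms(1) r by (simp add: mms_cball_fmeasurable)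
    moreover have "cball x (\<Lambda> * r) \<subseteq> cball x (2^M * r)"
      using M r by (intro subset_cball) simp
    ultimately have "measure \<mu> (cball x (\<Lambda> * r)) \<le> measure \<mu> (cball x (2^M * r))"
      using assms(1) unfolding mms_def by (intro measure_mono_fmeasurable) auto
    also have "\<dots> \<le> D^M * measure \<mu> (cball x r)"
      using measure_cball_pow2_le[OF dbl] r by (simp add: D_def)
    finally show "measure \<mu> (cball x (\<Lambda> * r)) \<le> D^M * measure \<mu> (cball x r)" .
  qed
qed

lemma power_bracket:
  fixes \<epsilon> s :: real
  assumes \<epsilon>: "0 < \<epsilon>" "\<epsilon> < 1" and s: "0 < s" "s < \<epsilon>^(K+1)"
  obtains k where "K \<le> k" "s \<le> \<epsilon>^k" "\<epsilon>^(k+1) < s"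
proof -
  define n where "n = (LEAST n. \<epsilon>^n < s)"
  have n: "\<epsilon>^n < s"
    unfolding n_def by (rule LeastI_ex) (use real_arch_pow_inv[OF s(1) \<epsilon>(2)] in blast)
  have "K + 1 < n"
  proof (rule ccontr)
    assume "\<not> K + 1 < n"
    then have "\<epsilon>^(K+1) \<le> \<epsilon>^n" using \<epsilon> by (intro power_decreasing) auto
    then show False using n s by simp
  qed
  moreover have "\<not> \<epsilon>^(n-1) < s"
    unfolding n_def by (rule not_less_Least) (use \<open>K + 1 < n\<close> n_def in simp)
  ultimately show ?thesis using n by (intro that[of "n - 1"]) auto
qed

lemma cball_between_power_balls:
  fixes \<epsilon> r :: real
  assumes \<epsilon>: "0 < \<epsilon>" "\<epsilon> < 1" and r: "0 < r" "2 * r < \<epsilon>^(K+1)" and p: "dist c p \<le> r"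
  obtains k where "K \<le> k" "r \<le> \<epsilon>^k" "cball c r \<subseteq> cball p (\<epsilon>^k)"
    "cball p (\<epsilon>^k) \<subseteq> cball c ((1 + 2 / \<epsilon>) * r)"
proof -
  obtain k where k: "K \<le> k" "2 * r \<le> \<epsilon>^k" "\<epsilon>^(k+1) < 2 * r"
    using power_bracket[OF \<epsilon> _ r(2)] r(1) by auto
  have inner: "cball c r \<subseteq> cball p (\<epsilon>^k)"
  proof
    fix y assume "y \<in> cball c r"
    then have "dist p y \<le> 2 * r" using p dist_triangle[of p y c] by (simp add: dist_commute)
    then show "y \<in> cball p (\<epsilon>^k)" using k by simp
  qed
  have "\<epsilon>^k \<le> 2 * r / \<epsilon>" using k(3) \<epsilon> by (simp add: field_simps)
  then have "r + \<epsilon>^k \<le> (1 + 2 / \<epsilon>) * r" by (simp add: algebra_simps)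
  have outer: "cball p (\<epsilon>^k) \<subseteq> cball c ((1 + 2 / \<epsilon>) * r)"
  proof
    fix y assume "y \<in> cball p (\<epsilon>^k)"
    then have "dist c y \<le> r + \<epsilon>^k" using p dist_triangle[of c y p] by simp
    then show "y \<in> cball c ((1 + 2 / \<epsilon>) * r)" using \<open>r + \<epsilon>^k \<le> (1 + 2 / \<epsilon>) * r\<close> by simp
  qed
  show ?thesis
    using k r inner outer by (intro that[of k]) auto
qed

lemma cball_Int_le_of_sparse_point:
  fixes \<mu> m0 :: "'a::polish_space measure"
  assumes \<mu>: "mms \<mu>" and m0: "sets m0 = sets borel" and E: "E \<in> sets borel"
    and \<theta>: "0 \<le> \<theta>" and \<epsilon>: "0 < \<epsilon>" "\<epsilon> < 1" and C: "0 \<le> C" and t: "0 \<le> t"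
    and D: "\<And>x s. 0 < s \<Longrightarrow> s \<le> 1 \<Longrightarrow>
      measure \<mu> (cball x ((1 + 2 / \<epsilon>) * s)) \<le> D * measure \<mu> (cball x s)"
    and bound: "\<And>k. emeasure m0 (cball p (\<epsilon>^k) \<inter> E)
      \<le> ennreal (C * a k * measure \<mu> (cball p (\<epsilon>^k)) / (\<epsilon>^k) powr \<theta>)"
    and sparse: "\<And>k. K \<le> k \<Longrightarrow> a k \<le> t"
    and r: "0 < r" "2 * r < \<epsilon>^(K+1)" and p: "dist c p \<le> r"
  shows "emeasure m0 (cball c r \<inter> E) \<le> ennreal (t * C * D * (measure \<mu> (cball c r) / r powr \<theta>))"
proof -
  obtain k where k: "K \<le> k" "r \<le> \<epsilon>^k" and inner: "cball c r \<subseteq> cball p (\<epsilon>^k)"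
    and outer: "cball p (\<epsilon>^k) \<subseteq> cball c ((1 + 2 / \<epsilon>) * r)"
    using cball_between_power_balls[OF \<epsilon> r p] by blast
  have "r \<le> 1" using r \<epsilon> power_le_one[of \<epsilon> "K+1"] by simp
  have "cball c ((1 + 2 / \<epsilon>) * r) \<in> fmeasurable \<mu>"
    using \<mu> r \<epsilon> by (simp add: mms_cball_fmeasurable add_pos_pos)
  then have "measure \<mu> (cball p (\<epsilon>^k)) \<le> measure \<mu> (cball c ((1 + 2 / \<epsilon>) * r))"
    using outer \<mu> unfolding mms_def by (intro measure_mono_fmeasurable) auto
  also have "\<dots> \<le> D * measure \<mu> (cball c r)"
    using D r(1) \<open>r \<le> 1\<close> by blast
  finally have dilate: "measure \<mu> (cball p (\<epsilon>^k)) \<le> D * measure \<mu> (cball c r)" .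
  have "r powr \<theta> \<le> (\<epsilon>^k) powr \<theta>" using k r(1) \<theta> by (intro powr_mono2) auto
  have "emeasure m0 (cball c r \<inter> E) \<le> emeasure m0 (cball p (\<epsilon>^k) \<inter> E)"
    using inner m0 E by (intro emeasure_mono) auto
  also have "\<dots> \<le> ennreal (C * a k * measure \<mu> (cball p (\<epsilon>^k)) / (\<epsilon>^k) powr \<theta>)"
    by (rule bound)
  also have "\<dots> \<le> ennreal (t * C * D * (measure \<mu> (cball c r) / r powr \<theta>))"
  proof (rule ennreal_leI)
    have "C * a k * measure \<mu> (cball p (\<epsilon>^k)) / (\<epsilon>^k) powr \<theta>
        \<le> C * t * measure \<mu> (cball p (\<epsilon>^k)) / (\<epsilon>^k) powr \<theta>"
      using sparse[OF k(1)] C by (intro divide_right_mono mult_right_mono mult_left_mono) auto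
    also have "\<dots> \<le> C * t * measure \<mu> (cball p (\<epsilon>^k)) / r powr \<theta>"
      using \<open>r powr \<theta> \<le> (\<epsilon>^k) powr \<theta>\<close> r \<epsilon> C t by (intro divide_left_mono) auto
    also have "\<dots> \<le> C * t * (D * measure \<mu> (cball c r)) / r powr \<theta>"
      using dilate C t by (intro divide_right_mono mult_left_mono) auto
    finally show "C * a k * measure \<mu> (cball p (\<epsilon>^k)) / (\<epsilon>^k) powr \<theta>
        \<le> t * C * D * (measure \<mu> (cball c r) / r powr \<theta>)" by (simp add: mult_ac)
  qed
  finally show ?thesis .
qed

lemma H_theta_cover_emeasure_le:
  fixes \<mu> m0 :: "'a::polish_space measure"
  assumes \<mu>: "mms \<mu>" and H: "H_theta \<theta> \<mu> S < ennreal H" and \<delta>: "0 < \<delta>"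
    and m0: "sets m0 = sets borel" and E: "E \<in> sets borel" and A: "A \<subseteq> E" "A \<subseteq> S"
    and L: "0 \<le> L"
    and ball: "\<And>c r. 0 < r \<Longrightarrow> r < \<delta> \<Longrightarrow> cball c r \<inter> A \<noteq> {} \<Longrightarrow>
      emeasure m0 (cball c r \<inter> E) \<le> ennreal (L * (measure \<mu> (cball c r) / r powr \<theta>))"
  shows "\<exists>U\<in>sets m0. A \<subseteq> U \<and> emeasure m0 U \<le> ennreal (L * H)"
proof -
  have "H_delta \<theta> \<mu> \<delta> S < ennreal H"
    using H \<delta> unfolding H_theta_def by (meson SUP_upper greaterThan_iff le_less_trans)
  then obtain I c r where r: "\<And>i. i \<in> I \<Longrightarrow> 0 < r i \<and> r i < \<delta>"
    and cover: "S \<subseteq> (\<Union>i\<in>I. cball (c i) (r i))"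
    and sum: "(\<Sum>i. if i \<in> I then emeasure \<mu> (cball (c i) (r i)) / ennreal (r i powr \<theta>) else 0)
      < ennreal H"
    unfolding H_delta_def INF_less_iff by auto
  define f where "f i = (if i \<in> I then emeasure \<mu> (cball (c i) (r i)) / ennreal (r i powr \<theta>) else 0)" for i
  define B where "B i = (if i \<in> I \<and> cball (c i) (r i) \<inter> A \<noteq> {} then cball (c i) (r i) \<inter> E else {})" for i
  have B_sets: "B i \<in> sets m0" for i
    using E m0 unfolding B_def by auto
  have "A \<subseteq> (\<Union>i. B i)"
    using cover A unfolding B_def by fastforce
  have B_le: "emeasure m0 (B i) \<le> ennreal L * f i" for i
  proof (cases "i \<in> I \<and> cball (c i) (r i) \<inter> A \<noteq> {}")
    case True
    then have ri: "0 < r i" "r i < \<delta>" using r by auto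
    have "emeasure \<mu> (cball (c i) (r i)) = ennreal (measure \<mu> (cball (c i) (r i)))"
      using mms_cball_fmeasurable[OF \<mu> ri(1)] by (simp add: emeasure_eq_measure2)
    then have fi: "f i = ennreal (measure \<mu> (cball (c i) (r i)) / r i powr \<theta>)"
      using True ri by (simp add: f_def divide_ennreal)
    have "emeasure m0 (B i) = emeasure m0 (cball (c i) (r i) \<inter> E)"
      using True by (simp add: B_def)
    also have "\<dots> \<le> ennreal (L * (measure \<mu> (cball (c i) (r i)) / r i powr \<theta>))"
      using True by (intro ball ri) auto
    also have "\<dots> = ennreal L * f i"
      unfolding fi by (rule ennreal_mult'[OF L])
    finally show ?thesis .
  qed (auto simp: B_def)
  have "emeasure m0 (\<Union>i. B i) \<le> (\<Sum>i. emeasure m0 (B i))"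
    using B_sets by (intro emeasure_subadditive_countably) auto
  also have "\<dots> \<le> (\<Sum>i. ennreal L * f i)"
    using B_le by (intro suminf_le) auto
  also have "\<dots> \<le> ennreal L * ennreal H"
    using sum unfolding f_def by (simp add: mult_left_mono)
  also have "\<dots> = ennreal (L * H)"
    using L by (simp add: ennreal_mult')
  finally show ?thesis
    using B_sets \<open>A \<subseteq> (\<Union>i. B i)\<close> by blast
qed

lemma sparse_set_small_cover:
  fixes \<mu> m0 :: "'a::polish_space measure" and a :: "nat \<Rightarrow> 'a \<Rightarrow> real"
  assumes \<mu>: "mms \<mu>" "unif_loc_doubling \<mu>" and \<theta>: "0 \<le> \<theta>" and \<epsilon>: "0 < \<epsilon>" "\<epsilon> < 1"
    and H: "H_theta \<theta> \<mu> S < \<infinity>" and m0: "sets m0 = sets borel"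
    and E: "E \<in> sets borel" "E \<subseteq> S" and C: "0 \<le> C"
    and bound: "\<And>x k. x \<in> E \<Longrightarrow> emeasure m0 (cball x (\<epsilon>^k) \<inter> E)
      \<le> ennreal (C * a k x * measure \<mu> (cball x (\<epsilon>^k)) / (\<epsilon>^k) powr \<theta>)"
  obtains C' where "\<And>t K. 0 < t \<Longrightarrow>
    \<exists>U\<in>sets m0. {x\<in>E. \<forall>k\<ge>K. a k x \<le> t} \<subseteq> U \<and> emeasure m0 U \<le> ennreal (t * C')"
proof -
  obtain D where D: "0 \<le> D" "\<And>x s. 0 < s \<Longrightarrow> s \<le> 1 \<Longrightarrow>
      measure \<mu> (cball x ((1 + 2 / \<epsilon>) * s)) \<le> D * measure \<mu> (cball x s)"
    using unif_loc_doubling_dilation[OF \<mu>] by blast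
  define Hb where "Hb = enn2real (H_theta \<theta> \<mu> S) + 1"
  have Hb: "H_theta \<theta> \<mu> S < ennreal Hb"
    using H unfolding Hb_def by (simp add: ennreal_enn2real_if)
  show ?thesis
  proof (rule that)
    fix t :: real and K :: nat assume t: "0 < t"
    define A where "A = {x\<in>E. \<forall>k\<ge>K. a k x \<le> t}"
    have "\<exists>U\<in>sets m0. A \<subseteq> U \<and> emeasure m0 U \<le> ennreal (t * C * D * Hb)"
    proof (rule H_theta_cover_emeasure_le[OF \<mu>(1) Hb _ m0 E(1)])
      show "0 < \<epsilon>^(K+1) / 2" using \<epsilon> by simp
      show "A \<subseteq> E" "A \<subseteq> S" using E(2) by (auto simp: A_def)
      show "0 \<le> t * C * D" using t C D(1) by simp
    next
      fix c r assume r: "0 < r" "r < \<epsilon>^(K+1) / 2" and "cball c r \<inter> A \<noteq> {}"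
      then obtain p where p: "dist c p \<le> r" "p \<in> A" by auto
      show "emeasure m0 (cball c r \<inter> E) \<le> ennreal (t * C * D * (measure \<mu> (cball c r) / r powr \<theta>))"
        using p r t by (intro cball_Int_le_of_sparse_point[OF \<mu>(1) m0 E(1) \<theta> \<epsilon> C _ D(2) bound])
          (auto simp: A_def)
    qed
    then show "\<exists>U\<in>sets m0. {x\<in>E. \<forall>k\<ge>K. a k x \<le> t} \<subseteq> U \<and> emeasure m0 U \<le> ennreal (t * (C * D * Hb))"
      unfolding A_def by (simp add: mult.assoc)
  qed
qed

theorem mainTheorem9:
  fixes \<mu> :: "'a::polish_space measure" and p \<theta> \<epsilon> :: real and S :: "'a set"
  assumes "1 < p" and "class_A p \<mu>"
    and "0 \<le> \<theta>" and "ereal \<theta> < Q_lower \<mu> 1"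
    and "closed S" and "0 < H_theta \<theta> \<mu> S" and "H_theta \<theta> \<mu> S < \<infinity>"
    and "0 < \<epsilon>" and "\<epsilon> < 1"
  shows "M_str_class \<theta> \<epsilon> \<mu> S = M_class \<theta> \<epsilon> \<mu> S"
proof
  show "M_str_class \<theta> \<epsilon> \<mu> S \<subseteq> M_class \<theta> \<epsilon> \<mu> S"
    unfolding M_str_class_def by blast
  have \<mu>: "mms \<mu>" "unif_loc_doubling \<mu>"
    using \<open>class_A p \<mu>\<close> unfolding class_A_def by auto
  show "M_class \<theta> \<epsilon> \<mu> S \<subseteq> M_str_class \<theta> \<epsilon> \<mu> S"
  proof
    fix m assume m: "m \<in> M_class \<theta> \<epsilon> \<mu> S"
    obtain C where C: "0 < C" and bound: "\<And>E x k. E \<in> sets borel \<Longrightarrow> E \<subseteq> S \<Longrightarrow>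
      emeasure (m 0) (cball x (\<epsilon>^k) \<inter> E) \<le> ennreal (C *
        (measure (m k) (cball x (\<epsilon>^k) \<inter> E) / measure (m k) (cball x (\<epsilon>^k))) *
        measure \<mu> (cball x (\<epsilon>^k)) / (\<epsilon>^k) powr \<theta>)"
      using M_class_ball_Int_le[OF m \<open>0 < \<epsilon>\<close>] by blast
    have sets0: "sets (m 0) = sets borel"
      using m unfolding M_class_def is_meas_def by blast
    have "AE x in m 0. x \<in> E \<longrightarrow> 0 < limsup (\<lambda>k.
        ereal (measure (m k) (cball x (\<epsilon>^k) \<inter> E) / measure (m k) (cball x (\<epsilon>^k))))"
      if E: "E \<in> sets borel" "E \<subseteq> S" for E
      by (rule sparse_set_small_cover[OF \<mu> \<open>0 \<le> \<theta>\<close> \<open>0 < \<epsilon>\<close> \<open>\<epsilon> < 1\<close>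
          \<open>H_theta \<theta> \<mu> S < \<infinity>\<close> sets0 E less_imp_le[OF C] bound[OF E]])
        (rule AE_limsup_pos_of_small_covers)
    then show "m \<in> M_str_class \<theta> \<epsilon> \<mu> S"
      using m unfolding M_str_class_def by blast
  qed
qed

end
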